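(* Let $G$ and $H$ be finite simple graphs, where $G$ has no isolated vertices and $\gamma_t(G)=2\gamma(G)$. Let $S$ be a dominating set of $G$ of minimum cardinality $\gamma(G)$ and let $S'$ be a dominating set of $H$ of minimum cardinality with $|S'|=2$. Then $S\times S'$ is a dominating set of minimum cardinality of the lexicographic product $G\circ H$.
   Context: A set $D\subseteq V(G)$ is a dominating set if every vertex outside $D$ has a neighbor in $D$; $\gamma(\cdot)$ denotes the minimum cardinality of a dominating set. A set $D_t$ is a total dominating set if every vertex of the graph is adjacent to a vertex of $D_t$; $\gamma_t(G)$ is the minimum cardinality of a total dominating set (defined for graphs without isolated vertices). The lexicographic product $G\circ H$ has vertex set $V(G)\times V(H)$, with $(a,x)$ adjacent to $(b,y)$ iff either $\{a,b\}\in E(G)$, or $a=b$ and $\{x,y\}\in E(H)$. *)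

theory Defs
  imports Main
begin

definition simple_graph :: "'a set \<Rightarrow> ('a \<Rightarrow> 'a \<Rightarrow> bool) \<Rightarrow> bool" where
  "simple_graph V E \<longleftrightarrow> finite V \<and> (\<forall>x y. E x y \<longrightarrow> x \<in> V \<and> y \<in> V)
     \<and> (\<forall>x y. E x y \<longrightarrow> E y x) \<and> (\<forall>x. \<not> E x x)"

definition no_isolated :: "'a set \<Rightarrow> ('a \<Rightarrow> 'a \<Rightarrow> bool) \<Rightarrow> bool" where
  "no_isolated V E \<longleftrightarrow> (\<forall>v\<in>V. \<exists>u\<in>V. E v u)"

definition dominating :: "'a set \<Rightarrow> ('a \<Rightarrow> 'a \<Rightarrow> bool) \<Rightarrow> 'a set \<Rightarrow> bool" where
  "dominating V E D \<longleftrightarrow> D \<subseteq> V \<and> (\<forall>v\<in>V - D. \<exists>u\<in>D. E v u)"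

definition total_dominating :: "'a set \<Rightarrow> ('a \<Rightarrow> 'a \<Rightarrow> bool) \<Rightarrow> 'a set \<Rightarrow> bool" where
  "total_dominating V E D \<longleftrightarrow> D \<subseteq> V \<and> (\<forall>v\<in>V. \<exists>u\<in>D. E v u)"

definition domination_number :: "'a set \<Rightarrow> ('a \<Rightarrow> 'a \<Rightarrow> bool) \<Rightarrow> nat" where
  "domination_number V E = Min {card D | D. dominating V E D}"

definition total_domination_number :: "'a set \<Rightarrow> ('a \<Rightarrow> 'a \<Rightarrow> bool) \<Rightarrow> nat" where
  "total_domination_number V E = Min {card D | D. total_dominating V E D}"

definition min_dominating :: "'a set \<Rightarrow> ('a \<Rightarrow> 'a \<Rightarrow> bool) \<Rightarrow> 'a set \<Rightarrow> bool" where
  "min_dominating V E D \<longleftrightarrow> dominating V E D \<and> card D = domination_number V E"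

definition lex_edges :: "'a set \<Rightarrow> ('a \<Rightarrow> 'a \<Rightarrow> bool) \<Rightarrow> 'b set \<Rightarrow> ('b \<Rightarrow> 'b \<Rightarrow> bool)
    \<Rightarrow> ('a \<times> 'b) \<Rightarrow> ('a \<times> 'b) \<Rightarrow> bool" where
  "lex_edges VG EG VH EH p q \<longleftrightarrow> p \<in> VG \<times> VH \<and> q \<in> VG \<times> VH \<and>
     (EG (fst p) (fst q) \<or> (fst p = fst q \<and> EH (snd p) (snd q)))"

end

theory Submission
  imports Defs
begin

text \<open>Every dominating set of \<open>G \<circ> H\<close> projects to a dominating set \<open>P\<close> of \<open>G\<close>. Since no
single vertex dominates \<open>H\<close>, a dominating set must meet the \<open>H\<close>-layer over each vertex \<open>a\<close>
of \<open>P\<close> that is isolated in \<open>G[P]\<close> at least twice. Adding one \<open>G\<close>-neighbour for each such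
\<open>a\<close> turns \<open>P\<close> into a total dominating set, so \<open>\<gamma>(G \<circ> H) \<ge> \<gamma>\<^sub>t(G) = 2 \<gamma>(G)\<close>, and
\<open>S \<times> S'\<close> attains this bound.\<close>

lemma finite_cards_of_subsets:
  assumes "finite V" "\<And>D. P D \<Longrightarrow> D \<subseteq> V"
  shows "finite {card D | D. P D}"
proof (rule finite_subset)
  show "{card D | D. P D} \<subseteq> {..card V}"
    using assms by (auto intro: card_mono)
qed simp

lemma domination_number_le:
  assumes "finite V" "dominating V E D"
  shows "domination_number V E \<le> card D"
  unfolding domination_number_def
  using assms finite_cards_of_subsets[OF \<open>finite V\<close>, of "dominating V E"]
  by (intro Min_le) (auto simp: dominating_def)

lemma total_domination_number_le:
  assumes "finite V" "total_dominating V E D"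
  shows "total_domination_number V E \<le> card D"
  unfolding total_domination_number_def
  using assms finite_cards_of_subsets[OF \<open>finite V\<close>, of "total_dominating V E"]
  by (intro Min_le) (auto simp: total_dominating_def)

lemma min_dominatingI:
  assumes "finite V" "dominating V E D"
    and "\<And>D'. dominating V E D' \<Longrightarrow> card D \<le> card D'"
  shows "min_dominating V E D"
  unfolding min_dominating_def domination_number_def
  using assms finite_cards_of_subsets[OF \<open>finite V\<close>, of "dominating V E"]
  by (auto intro!: Min_eqI[symmetric] simp: dominating_def)

lemma not_dominating_singleton:
  assumes "finite V" "2 \<le> domination_number V E"
  shows "\<not> dominating V E {y}"
  using domination_number_le[OF \<open>finite V\<close>, of E "{y}"] assms(2) by auto

definition isolated_in :: "('a \<Rightarrow> 'a \<Rightarrow> bool) \<Rightarrow> 'a set \<Rightarrow> 'a set" where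
  "isolated_in E P = {a \<in> P. \<forall>b \<in> P. \<not> E a b}"

lemma total_domination_number_le_isolated:
  assumes "finite V" "no_isolated V E" "dominating V E P"
  shows "total_domination_number V E \<le> card P + card (isolated_in E P)"
proof -
  define A where "A = isolated_in E P"
  have "finite P"
    using assms(1,3) finite_subset by (auto simp: dominating_def)
  then have "finite A"
    by (simp add: A_def isolated_in_def)
  obtain nbr where nbr: "\<And>v. v \<in> V \<Longrightarrow> nbr v \<in> V \<and> E v (nbr v)"
    using assms(2) unfolding no_isolated_def by metis
  define T where "T = P \<union> nbr ` A"
  have "total_dominating V E T"
    unfolding total_dominating_def
  proof (intro conjI ballI)
    show "T \<subseteq> V"
      using assms(3) nbr by (auto simp: T_def A_def isolated_in_def dominating_def)
    fix v assume "v \<in> V"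
    consider "v \<in> A" | "v \<in> P - A" | "v \<in> V - P"
      using \<open>v \<in> V\<close> A_def isolated_in_def by blast
    then show "\<exists>u\<in>T. E v u"
    proof cases
      case 1
      then show ?thesis using nbr \<open>v \<in> V\<close> by (auto simp: T_def)
    next
      case 2
      then show ?thesis by (auto simp: T_def A_def isolated_in_def)
    next
      case 3
      then show ?thesis using assms(3) by (auto simp: T_def dominating_def)
    qed
  qed
  then have "total_domination_number V E \<le> card T"
    by (rule total_domination_number_le[OF assms(1)])
  also have "\<dots> \<le> card P + card (nbr ` A)"
    by (simp add: T_def card_Un_le)
  also have "\<dots> \<le> card P + card A"
    using card_image_le[OF \<open>finite A\<close>] by simp
  finally show ?thesis
    by (simp add: A_def)
qed

lemma card_image_plus_le:
  assumes "finite D" "A \<subseteq> f ` D"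
    and "\<And>a. a \<in> A \<Longrightarrow> 2 \<le> card {p \<in> D. f p = a}"
  shows "card (f ` D) + card A \<le> card D"
proof -
  have "finite A" "card A \<le> card (f ` D)"
    using assms(1,2) by (auto intro: finite_subset card_mono)
  then have "card (f ` D) + card A = (\<Sum>a \<in> f ` D. if a \<in> A then 2 else 1)"
    using assms by (simp add: sum.If_cases Int_absorb1 Diff_eq[symmetric] card_Diff_subset)
  also have "\<dots> \<le> (\<Sum>a \<in> f ` D. card {p \<in> D. f p = a})"
  proof (rule sum_mono)
    fix a assume "a \<in> f ` D"
    then have "{p \<in> D. f p = a} \<noteq> {}"
      by auto
    then have "1 \<le> card {p \<in> D. f p = a}"
      using assms(1) by (simp add: Suc_le_eq card_gt_0_iff)
    then show "(if a \<in> A then 2 else 1) \<le> card {p \<in> D. f p = a}"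
      using assms(3) by simp
  qed
  also have "\<dots> = card D"
    using sum.image_gen[OF assms(1), of "\<lambda>_. 1 :: nat" f] by simp
  finally show ?thesis .
qed

lemma dominating_lex_product:
  assumes "dominating VG EG S" "dominating VH EH S'" "S' \<noteq> {}"
  shows "dominating (VG \<times> VH) (lex_edges VG EG VH EH) (S \<times> S')"
  unfolding dominating_def
proof (intro conjI ballI)
  show "S \<times> S' \<subseteq> VG \<times> VH"
    using assms(1,2) by (auto simp: dominating_def)
  obtain y0 where "y0 \<in> S'"
    using assms(3) by blast
  fix p assume p: "p \<in> VG \<times> VH - S \<times> S'"
  obtain a x where [simp]: "p = (a, x)"
    by (cases p)
  show "\<exists>u\<in>S \<times> S'. lex_edges VG EG VH EH p u"
  proof (cases "a \<in> S")
    case False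
    then obtain b where "b \<in> S" "EG a b"
      using assms(1) p by (auto simp: dominating_def)
    with assms(1,2) \<open>y0 \<in> S'\<close> p have "(b, y0) \<in> S \<times> S'" "lex_edges VG EG VH EH p (b, y0)"
      by (auto simp: lex_edges_def dominating_def)
    then show ?thesis ..
  next
    case True
    then obtain y where "y \<in> S'" "EH x y"
      using assms(2) p by (auto simp: dominating_def)
    with assms(1,2) True p have "(a, y) \<in> S \<times> S'" "lex_edges VG EG VH EH p (a, y)"
      by (auto simp: lex_edges_def dominating_def)
    then show ?thesis ..
  qed
qed

context
  fixes VG :: "'a set" and EG :: "'a \<Rightarrow> 'a \<Rightarrow> bool"
    and VH :: "'b set" and EH :: "'b \<Rightarrow> 'b \<Rightarrow> bool"
    and D :: "('a \<times> 'b) set"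
  assumes D: "dominating (VG \<times> VH) (lex_edges VG EG VH EH) D"
begin

lemma dominating_fst_image:
  assumes "VH \<noteq> {}"
  shows "dominating VG EG (fst ` D)"
  unfolding dominating_def
proof (intro conjI ballI)
  show "fst ` D \<subseteq> VG"
    using D by (auto simp: dominating_def)
  fix v assume v: "v \<in> VG - fst ` D"
  obtain x where "x \<in> VH"
    using assms by blast
  moreover have "(v, x) \<notin> D"
    using v by force
  ultimately obtain q where "q \<in> D" "lex_edges VG EG VH EH (v, x) q"
    using v D unfolding dominating_def by blast
  moreover from this v have "fst q \<noteq> v"
    by auto
  ultimately show "\<exists>u\<in>fst ` D. EG v u"
    by (auto simp: lex_edges_def)
qed

lemma two_le_card_fibre_isolated:
  assumes "finite D" "\<And>y. \<not> dominating VH EH {y}"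
    and a: "a \<in> isolated_in EG (fst ` D)"
  shows "2 \<le> card {p \<in> D. fst p = a}"
proof (rule ccontr)
  assume "\<not> 2 \<le> card {p \<in> D. fst p = a}"
  moreover have "card {p \<in> D. fst p = a} \<noteq> 0"
    using a assms(1) by (auto simp: isolated_in_def)
  ultimately have "card {p \<in> D. fst p = a} = 1"
    by linarith
  then obtain q where q: "{p \<in> D. fst p = a} = {q}"
    by (rule card_1_singletonE)
  then have "fst q = a"
    by blast
  with q obtain y where fibre: "{p \<in> D. fst p = a} = {(a, y)}"
    by (metis prod.collapse)
  have "dominating VH EH {y}"
    unfolding dominating_def
  proof (intro conjI ballI)
    show "{y} \<subseteq> VH"
      using fibre D by (auto simp: dominating_def)
    fix x assume x: "x \<in> VH - {y}"
    have "(a, x) \<notin> {p \<in> D. fst p = a}"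
      using fibre x by simp
    then have "(a, x) \<notin> D"
      by simp
    moreover have "a \<in> VG"
      using a D by (auto simp: isolated_in_def dominating_def)
    ultimately obtain q where q: "q \<in> D" "lex_edges VG EG VH EH (a, x) q"
      using D x unfolding dominating_def by blast
    have "\<not> EG a (fst q)"
      using a q(1) by (auto simp: isolated_in_def)
    with q(2) have "fst q = a" "EH x (snd q)"
      by (auto simp: lex_edges_def)
    with q(1) fibre show "\<exists>u\<in>{y}. EH x u"
      by auto
  qed
  with assms(2) show False
    by blast
qed

lemma total_domination_number_le_dominating_lex:
  assumes "finite VG" "finite VH" "no_isolated VG EG"
    and "VH \<noteq> {}" "\<And>y. \<not> dominating VH EH {y}"
  shows "total_domination_number VG EG \<le> card D"
proof -
  have "finite D"
    using D assms(1,2) finite_subset by (auto simp: dominating_def)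
  have "total_domination_number VG EG \<le> card (fst ` D) + card (isolated_in EG (fst ` D))"
    using assms(1,3) dominating_fst_image[OF assms(4)]
    by (rule total_domination_number_le_isolated)
  also have "\<dots> \<le> card D"
    using \<open>finite D\<close> two_le_card_fibre_isolated[OF \<open>finite D\<close> assms(5)]
    by (intro card_image_plus_le) (auto simp: isolated_in_def)
  finally show ?thesis .
qed

end

theorem mainTheorem8:
  fixes VG :: "'a set" and EG :: "'a \<Rightarrow> 'a \<Rightarrow> bool"
    and VH :: "'b set" and EH :: "'b \<Rightarrow> 'b \<Rightarrow> bool"
    and S :: "'a set" and S' :: "'b set"
  assumes "simple_graph VG EG" and "simple_graph VH EH"
    and "no_isolated VG EG"
    and "total_domination_number VG EG = 2 * domination_number VG EG"
    and "min_dominating VG EG S"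
    and "min_dominating VH EH S'" and "card S' = 2"
  shows "min_dominating (VG \<times> VH) (lex_edges VG EG VH EH) (S \<times> S')"
proof -
  have "finite VG" "finite VH"
    using assms(1,2) by (auto simp: simple_graph_def)
  have S: "dominating VG EG S" "card S = domination_number VG EG"
    and S': "dominating VH EH S'" "domination_number VH EH = 2"
    using assms(5-7) by (auto simp: min_dominating_def)
  have "S' \<noteq> {}" "VH \<noteq> {}"
    using assms(7) S'(1) by (auto simp: dominating_def)
  have no_dominating_vertex: "\<And>y. \<not> dominating VH EH {y}"
    using \<open>finite VH\<close> S'(2) by (simp add: not_dominating_singleton)
  show ?thesis
  proof (rule min_dominatingI)
    show "finite (VG \<times> VH)"
      using \<open>finite VG\<close> \<open>finite VH\<close> by simp
    show "dominating (VG \<times> VH) (lex_edges VG EG VH EH) (S \<times> S')"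
      using S(1) S'(1) \<open>S' \<noteq> {}\<close> by (rule dominating_lex_product)
    fix D assume "dominating (VG \<times> VH) (lex_edges VG EG VH EH) D"
    then have "total_domination_number VG EG \<le> card D"
      using \<open>finite VG\<close> \<open>finite VH\<close> assms(3) \<open>VH \<noteq> {}\<close> no_dominating_vertex
      by (rule total_domination_number_le_dominating_lex)
    then show "card (S \<times> S') \<le> card D"
      using assms(4,7) S(2) by (simp add: card_cartesian_product)
  qed
qed

end
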